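(* For a set of languages $\mathcal{R}$ let $\dot{\mathcal{R}}^\star=\{L^\star\mid L\in\mathcal{R}\}$. (1) There exists a rational set of regular languages $\mathcal{R}$ such that $\dot{\mathcal{R}}^\star$ is not a rational set of regular languages. (2) If $\mathcal{R}$ is a finite rational set of regular languages, then $\dot{\mathcal{R}}^\star$ is a finite rational set of regular languages. (3) Expressing $\dot{\mathcal{R}}^\star$ in the finite case in general requires a new language substitution: there exist an alphabet $\Delta$, a regular language substitution $\varphi:\Delta\to2^{\Sigma^*}$ and a regular $K\subseteq\Delta^+$ with $\mathcal{R}=(K,\varphi)$ finite, such that there is no regular $K'\subseteq\Delta^+$ with $\dot{\mathcal{R}}^\star=(K',\varphi)$.
   Context: Alphabets are nonempty finite sets. A regular language substitution $\varphi:\Delta\to2^{\Sigma^*}$ maps each symbol to a regular language over $\Sigma$, extended by $\varphi(\delta w)=\varphi(\delta)\varphi(w)$. A set $\mathcal{R}$ of regular languages over $\Sigma$ is a rational set of regular languages, written $\mathcal{R}=(K,\varphi)$, if there are an alphabet $\Delta$, a regular $K\subseteq\Delta^+$ and a regular language substitution $\varphi$ with $\mathcal{R}=\{\varphi(w)\mid w\in K\}$. *)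

theory Defs
  imports Main
begin

text \<open>Words over an alphabet are lists; a word w lies in Sigma^* iff set w is a subset of Sigma.
An alphabet is a nonempty finite set of symbols.\<close>

definition alphabet :: "'a set \<Rightarrow> bool" where
  "alphabet S \<longleftrightarrow> finite S \<and> S \<noteq> {}"

definition conc :: "'a list set \<Rightarrow> 'a list set \<Rightarrow> 'a list set" where
  "conc A B = {u @ v | u v. u \<in> A \<and> v \<in> B}"

fun lpow :: "'a list set \<Rightarrow> nat \<Rightarrow> 'a list set" where
  "lpow A 0 = {[]}"
| "lpow A (Suc n) = conc A (lpow A n)"

definition lstar :: "'a list set \<Rightarrow> 'a list set" where
  "lstar A = (\<Union>n. lpow A n)"

datatype 'a rexp = Zero | One | Atom 'a | Plus "'a rexp" "'a rexp"
  | Times "'a rexp" "'a rexp" | Star "'a rexp"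

fun lang :: "'a rexp \<Rightarrow> 'a list set" where
  "lang Zero = {}"
| "lang One = {[]}"
| "lang (Atom a) = {[a]}"
| "lang (Plus r s) = lang r \<union> lang s"
| "lang (Times r s) = conc (lang r) (lang s)"
| "lang (Star r) = lstar (lang r)"

fun atoms :: "'a rexp \<Rightarrow> 'a set" where
  "atoms Zero = {}"
| "atoms One = {}"
| "atoms (Atom a) = {a}"
| "atoms (Plus r s) = atoms r \<union> atoms s"
| "atoms (Times r s) = atoms r \<union> atoms s"
| "atoms (Star r) = atoms r"

definition regular :: "'a set \<Rightarrow> 'a list set \<Rightarrow> bool" where
  "regular S L \<longleftrightarrow> (\<exists>r. atoms r \<subseteq> S \<and> lang r = L)"

definition plus_words :: "'d set \<Rightarrow> 'd list set" where
  "plus_words D = {w. w \<noteq> [] \<and> set w \<subseteq> D}"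

definition subst :: "('d \<Rightarrow> 'a list set) \<Rightarrow> 'd list \<Rightarrow> 'a list set" where
  "subst phi w = foldr (\<lambda>d A. conc (phi d) A) w {[]}"

definition reg_subst :: "'d set \<Rightarrow> 'a set \<Rightarrow> ('d \<Rightarrow> 'a list set) \<Rightarrow> bool" where
  "reg_subst D S phi \<longleftrightarrow> (\<forall>d\<in>D. regular S (phi d))"

definition ratset :: "'d list set \<Rightarrow> ('d \<Rightarrow> 'a list set) \<Rightarrow> 'a list set set" where
  "ratset K phi = subst phi ` K"

text \<open>Rational set of regular languages over S. The alphabet Delta is taken to be a
finite nonempty set of natural numbers (every finite alphabet is in bijection with such).\<close>
definition rational_set :: "'a set \<Rightarrow> 'a list set set \<Rightarrow> bool" where
  "rational_set S R \<longleftrightarrow>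
     (\<exists>(D::nat set) K phi. alphabet D \<and> regular D K \<and> K \<subseteq> plus_words D
        \<and> reg_subst D S phi \<and> R = ratset K phi)"

end

theory Submission imports Defs begin

text \<open>(1) Take \<open>R = {{a\<^sup>n} | n \<ge> 1}\<close>, given by \<open>\<phi>(0) = {a}\<close> and \<open>K = 0\<^sup>+\<close>. Its stars are the
languages \<open>(a\<^sup>n)\<^sup>*\<close>. If \<open>(a\<^sup>n)\<^sup>* = \<phi>'(w)\<close>, then \<open>\<epsilon>\<close> lies in every factor \<open>\<phi>'(d)\<close>, so every factor is
contained in \<open>(a\<^sup>n)\<^sup>*\<close>; since all lengths there are multiples of \<open>n\<close>, the word \<open>a\<^sup>n\<close> must come
from a single factor. That letter \<open>d\<close> determines \<open>n\<close>, so infinitely many letters would be needed.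
(2) Star each of the finitely many (regular) members and index them by fresh letters.
(3) With \<open>\<phi>(0) = {a}\<close> no image of a nonempty word contains \<open>\<epsilon>\<close>, but every star does.\<close>

lemma subst_Nil [simp]: "subst phi [] = {[]}"
  by (simp add: subst_def)

lemma subst_Cons [simp]: "subst phi (d # w) = conc (phi d) (subst phi w)"
  by (simp add: subst_def)

lemma conc_Nil_right [simp]: "conc A {[]} = A"
  by (simp add: conc_def)

lemma Nil_in_lstar: "[] \<in> lstar L"
  unfolding lstar_def by (auto intro!: exI[of _ 0])

lemma regular_subst:
  assumes "\<forall>d\<in>set w. regular S (phi d)"
  shows "regular S (subst phi w)"
  using assms
proof (induction w)
  case Nil
  then show ?case by (auto simp: regular_def intro!: exI[of _ One])
next
  case (Cons d w)
  then obtain r s where "atoms r \<subseteq> S" "lang r = phi d" "atoms s \<subseteq> S" "lang s = subst phi w"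
    unfolding regular_def by auto
  then show ?case unfolding regular_def by (intro exI[of _ "Times r s"]) auto
qed

lemma regular_lstar: "regular S L \<Longrightarrow> regular S (lstar L)"
  unfolding regular_def by (metis atoms.simps(6) lang.simps(6))

lemma regular_singleton_words:
  assumes "finite A" "A \<subseteq> D"
  shows "regular D ((\<lambda>a. [a]) ` A)"
  using assms
proof (induction A rule: finite_induct)
  case empty
  then show ?case by (auto simp: regular_def intro!: exI[of _ Zero])
next
  case (insert a A)
  then obtain r where "atoms r \<subseteq> D" "lang r = (\<lambda>a. [a]) ` A"
    unfolding regular_def by auto
  with insert.prems show ?case
    unfolding regular_def by (intro exI[of _ "Plus (Atom a) r"]) auto
qed

lemma rational_set_regular:
  assumes "rational_set S R" "L \<in> R"
  shows "regular S L"
proof -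
  obtain D K phi where "K \<subseteq> plus_words (D::nat set)" "reg_subst D S phi" "R = ratset K phi"
    using assms(1) unfolding rational_set_def by blast
  with assms(2) obtain w where "L = subst phi w" "set w \<subseteq> D"
    by (auto simp: ratset_def plus_words_def)
  with \<open>reg_subst D S phi\<close> show ?thesis
    by (auto simp: reg_subst_def intro: regular_subst)
qed

lemma finite_regular_rational_set:
  assumes "finite R" and regR: "\<And>L. L \<in> R \<Longrightarrow> regular S L"
  shows "rational_set S R"
proof -
  obtain ls where ls: "set ls = R"
    using assms(1) finite_list by blast
  define m where "m = length ls"
  define phi where "phi = (\<lambda>i. if i < m then ls ! i else {[]})"
  define K where "K = (\<lambda>i. [i]) ` {..<m}"
  \<comment> \<open>\<open>{0..m}\<close> rather than \<open>{..<m}\<close>, since an alphabet must be nonempty even for \<open>R = {}\<close>\<close>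
  have "alphabet {0..m}"
    by (simp add: alphabet_def)
  moreover have "regular {0..m} K"
    unfolding K_def by (rule regular_singleton_words) auto
  moreover have "K \<subseteq> plus_words {0..m}"
    by (auto simp: K_def plus_words_def)
  moreover have "reg_subst {0..m} S phi"
    unfolding reg_subst_def phi_def
  proof
    fix i
    have "regular S {[]}"
      unfolding regular_def by (intro exI[of _ One]) simp
    then show "regular S (if i < m then ls ! i else {[]})"
      using ls regR by (auto simp: m_def)
  qed
  moreover have "ratset K phi = R"
  proof -
    have "ratset K phi = (!) ls ` {..<m}"
      unfolding ratset_def K_def image_image by (simp add: phi_def)
    also have "\<dots> = R"
      using ls by (metis m_def atLeast_upt image_set map_nth set_map)
    finally show ?thesis .
  qed
  ultimately show ?thesis
    unfolding rational_set_def by blast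
qed

definition unary_multiples :: "'a \<Rightarrow> nat \<Rightarrow> 'a list set" where
  "unary_multiples a n = {w. set w \<subseteq> {a} \<and> n dvd length w}"

lemma lpow_singleton_replicate: "lpow {replicate n a} k = {replicate (n * k) a}"
  by (induction k) (auto simp: conc_def replicate_add[symmetric])

lemma lstar_singleton_replicate: "lstar {replicate n a} = unary_multiples a n"
proof -
  have "w = replicate (length w) a" if "set w \<subseteq> {a}" for w
    using that by (metis replicate_length_same singletonD subsetD)
  then show ?thesis
    unfolding lstar_def lpow_singleton_replicate unary_multiples_def
    by (fastforce elim!: dvdE)
qed

lemma subst_const_singleton: "subst (\<lambda>_. {[a]}) w = {replicate (length w) a}"
  by (induction w) (auto simp: conc_def)

lemma regular_plus_words_singleton: "regular {a} (plus_words {a})"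
proof -
  have "plus_words {a} = conc {[a]} (unary_multiples a 1)"
    by (auto simp: conc_def unary_multiples_def plus_words_def neq_Nil_conv)
  also have "\<dots> = lang (Times (Atom a) (Star (Atom a)))"
    using lstar_singleton_replicate[of 1 a] by simp
  finally show ?thesis
    unfolding regular_def by (metis atoms.simps(3,5,6) sup.idem order_refl)
qed

lemma Nil_in_subst_iff: "[] \<in> subst phi w \<longleftrightarrow> (\<forall>d\<in>set w. [] \<in> phi d)"
  by (induction w) (auto simp: conc_def)

lemma subst_factor_subset:
  assumes "[] \<in> subst phi w" "d \<in> set w"
  shows "phi d \<subseteq> subst phi w"
  using assms
proof (induction w)
  case Nil
  then show ?case by simp
next
  case (Cons e w)
  have "[] \<in> phi e" "[] \<in> subst phi w"
    using Cons.prems(1) by (auto simp: conc_def)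
  then have "phi e \<subseteq> subst phi (e # w)" "subst phi w \<subseteq> subst phi (e # w)"
    unfolding subst_Cons conc_def by force+
  moreover have "d = e \<or> phi d \<subseteq> subst phi w"
    using Cons.IH Cons.prems(2) \<open>[] \<in> subst phi w\<close> by auto
  ultimately show ?case by auto
qed

lemma subst_period_word_in_factor:
  assumes period: "\<And>d x. d \<in> set w \<Longrightarrow> x \<in> phi d \<Longrightarrow> n dvd length x"
    and "u \<in> subst phi w" "length u = n" "n > 0"
  shows "\<exists>d\<in>set w. u \<in> phi d"
  using assms
proof (induction w arbitrary: u)
  case Nil
  then show ?case by auto
next
  case (Cons d w)
  then obtain x y where u: "u = x @ y" and x: "x \<in> phi d" and y: "y \<in> subst phi w"
    by (auto simp: conc_def)
  have "n dvd length x"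
    using Cons.prems(1)[of d x] x by simp
  show ?case
  proof (cases "x = []")
    case True
    with Cons y u show ?thesis by auto
  next
    case False
    with \<open>n dvd length x\<close> \<open>n > 0\<close> have "length x \<ge> n"
      by (simp add: dvd_imp_le)
    with u \<open>length u = n\<close> have "y = []"
      by (cases y) auto
    with u x show ?thesis by auto
  qed
qed

lemma subst_eq_unary_multiples_letter:
  assumes "subst phi w = unary_multiples a n" "n > 0"
  shows "\<exists>d\<in>set w. replicate n a \<in> phi d \<and> phi d \<subseteq> unary_multiples a n"
proof -
  have "[] \<in> subst phi w"
    using assms(1) by (simp add: unary_multiples_def)
  then have factors: "\<forall>d\<in>set w. phi d \<subseteq> unary_multiples a n"
    using subst_factor_subset[OF \<open>[] \<in> subst phi w\<close>] unfolding assms(1) by blast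
  have "\<exists>d\<in>set w. replicate n a \<in> phi d"
  proof (rule subst_period_word_in_factor)
    show "n dvd length x" if "d \<in> set w" "x \<in> phi d" for d x
      using factors that by (auto simp: unary_multiples_def)
    show "replicate n a \<in> subst phi w"
      using assms(1) by (auto simp: unary_multiples_def)
  qed (use assms(2) in simp_all)
  with factors show ?thesis by blast
qed

lemma not_rational_set_unary_multiples:
  assumes "infinite N" "0 \<notin> N"
  shows "\<not> rational_set S (unary_multiples a ` N)"
proof
  assume "rational_set S (unary_multiples a ` N)"
  then obtain D K phi where D: "alphabet (D::nat set)" and K: "K \<subseteq> plus_words D"
    and eq: "unary_multiples a ` N = ratset K phi"
    unfolding rational_set_def by auto
  have "\<exists>d\<in>D. replicate n a \<in> phi d \<and> phi d \<subseteq> unary_multiples a n" if "n \<in> N" for n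
  proof -
    have "unary_multiples a n \<in> subst phi ` K"
      using eq \<open>n \<in> N\<close> unfolding ratset_def by blast
    then obtain w where "w \<in> K" "subst phi w = unary_multiples a n"
      by auto
    moreover have "n > 0"
      using \<open>n \<in> N\<close> assms(2) by (cases n) auto
    ultimately obtain d where "d \<in> set w" "replicate n a \<in> phi d \<and> phi d \<subseteq> unary_multiples a n"
      using subst_eq_unary_multiples_letter[of phi w a n] by blast
    moreover have "set w \<subseteq> D"
      using \<open>w \<in> K\<close> K by (auto simp: plus_words_def)
    ultimately show ?thesis
      by blast
  qed
  then obtain f where f: "\<And>n. n \<in> N \<Longrightarrow>
      f n \<in> D \<and> replicate n a \<in> phi (f n) \<and> phi (f n) \<subseteq> unary_multiples a n"
    by metis
  have "inj_on f N"
  proof (rule inj_onI)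
    fix n m assume "n \<in> N" "m \<in> N" "f n = f m"
    then have "replicate n a \<in> unary_multiples a m" "replicate m a \<in> unary_multiples a n"
      using f[of n] f[of m] by auto
    then show "n = m"
      by (simp add: unary_multiples_def dvd_antisym)
  qed
  moreover have "finite (f ` N)"
    using f D by (meson alphabet_def finite_subset image_subsetI)
  ultimately show False
    using assms(1) finite_imageD by blast
qed

lemma reg_subst_const_letter: "reg_subst D {a} (\<lambda>_. {[a]})"
  unfolding reg_subst_def regular_def by (auto intro!: exI[of _ "Atom a"])

lemma rational_set_lstar_fails:
  "\<exists>(S::nat set) R. alphabet S \<and> rational_set S R \<and> \<not> rational_set S (lstar ` R)"
proof -
  define phi where "phi = (\<lambda>_::nat. {[0::nat]})"
  define R where "R = ratset (plus_words {0}) phi"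
  have "alphabet {0::nat}"
    by (simp add: alphabet_def)
  moreover have "rational_set {0} R"
    using \<open>alphabet {0}\<close> unfolding rational_set_def R_def phi_def
    by (intro exI[of _ "{0::nat}"] exI[of _ "plus_words {0::nat}"] exI[of _ "\<lambda>_::nat. {[0::nat]}"])
      (simp add: regular_plus_words_singleton reg_subst_const_letter)
  moreover have "lstar ` R = unary_multiples 0 ` {0<..}"
  proof -
    have lengths: "length ` plus_words {0::nat} = {0<..}"
    proof (intro equalityI subsetI)
      fix n :: nat assume "n \<in> {0<..}"
      then have "replicate n 0 \<in> plus_words {0::nat}"
        by (simp add: plus_words_def)
      then show "n \<in> length ` plus_words {0::nat}"
        by (metis image_eqI length_replicate)
    qed (auto simp: plus_words_def)
    have "R = (\<lambda>n. {replicate n 0}) ` length ` plus_words {0::nat}"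
      unfolding R_def ratset_def phi_def subst_const_singleton image_image by (rule refl)
    then show ?thesis
      by (simp add: lengths image_image lstar_singleton_replicate)
  qed
  moreover have "\<not> rational_set {0} (unary_multiples (0::nat) ` {0<..})"
    by (rule not_rational_set_unary_multiples) (simp_all add: infinite_Ioi)
  ultimately show ?thesis
    by metis
qed

lemma finite_rational_set_lstar:
  assumes "rational_set S R" "finite R"
  shows "finite (lstar ` R) \<and> rational_set S (lstar ` R)"
  using assms rational_set_regular regular_lstar
  by (blast intro: finite_regular_rational_set)

lemma lstar_notin_ratset:
  assumes "\<forall>d\<in>D. [] \<notin> phi d" "K \<subseteq> plus_words D"
  shows "lstar L \<notin> ratset K phi"
proof
  assume "lstar L \<in> ratset K phi"
  then obtain w where "w \<in> K" "lstar L = subst phi w"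
    unfolding ratset_def by blast
  then have "[] \<in> subst phi w" "w \<noteq> []" "set w \<subseteq> D"
    using Nil_in_lstar assms(2) by (auto simp: plus_words_def)
  with assms(1) show False
    by (auto simp: Nil_in_subst_iff neq_Nil_conv)
qed

lemma lstar_needs_new_subst:
  "\<exists>(S::nat set) (D::nat set) phi K.
     alphabet S \<and> alphabet D \<and> reg_subst D S phi \<and> regular D K \<and> K \<subseteq> plus_words D
     \<and> finite (ratset K phi)
     \<and> \<not> (\<exists>K'. regular D K' \<and> K' \<subseteq> plus_words D \<and> lstar ` (ratset K phi) = ratset K' phi)"
proof -
  define phi where "phi = (\<lambda>_::nat. {[0::nat]})"
  have "alphabet {0::nat}"
    by (simp add: alphabet_def)
  moreover have "reg_subst {0} {0} phi"
    unfolding phi_def by (rule reg_subst_const_letter)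
  moreover have "regular {0} {[0::nat]}"
    unfolding regular_def by (intro exI[of _ "Atom 0"]) simp
  moreover have "{[0::nat]} \<subseteq> plus_words {0}" "finite (ratset {[0::nat]} phi)"
    by (simp_all add: plus_words_def ratset_def)
  moreover have "\<not> (\<exists>K'. K' \<subseteq> plus_words {0} \<and> lstar ` (ratset {[0]} phi) = ratset K' phi)"
  proof
    assume "\<exists>K'. K' \<subseteq> plus_words {0} \<and> lstar ` (ratset {[0]} phi) = ratset K' phi"
    moreover have "lstar (phi 0) \<in> lstar ` (ratset {[0]} phi)"
      by (simp add: ratset_def)
    moreover have "\<forall>d\<in>{0}. [] \<notin> phi d"
      by (simp add: phi_def)
    ultimately show False
      using lstar_notin_ratset by metis
  qed
  ultimately show ?thesis
    by blast
qed

theorem proposition2: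
  shows "(\<exists>(S::nat set) R. alphabet S \<and> rational_set S R \<and> \<not> rational_set S (lstar ` R))
    \<and> (\<forall>(S::'a set) R. alphabet S \<longrightarrow> rational_set S R \<longrightarrow> finite R \<longrightarrow>
          finite (lstar ` R) \<and> rational_set S (lstar ` R))
    \<and> (\<exists>(S::nat set) (D::nat set) phi K.
          alphabet S \<and> alphabet D \<and> reg_subst D S phi \<and> regular D K \<and> K \<subseteq> plus_words D
          \<and> finite (ratset K phi)
          \<and> \<not> (\<exists>K'. regular D K' \<and> K' \<subseteq> plus_words D
                  \<and> lstar ` (ratset K phi) = ratset K' phi))"
  using rational_set_lstar_fails finite_rational_set_lstar lstar_needs_new_subst by blast

end
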